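(* Let $p\neq 2,5$ be a prime, let $K$ be the perfect closure of $\mathbb F_p(t)$, and let $C^-$ be the genus-$2$ curve $y^2=x^5-5x^3+5x+2-4t$ over $K$. Let $M$ be the Cartier–Manin matrix of $C^-$ with respect to the basis $\{dx/y,\ x\,dx/y\}$ of $H^0(C^-,\Omega^1)$. Then $$M=\begin{pmatrix}*&0\\0&*\end{pmatrix}\ \text{ if } p\equiv 1,4\pmod 5,\qquad M=\begin{pmatrix}0&*\\ *&0\end{pmatrix}\ \text{ if } p\equiv 2,3\pmod 5,$$ where the entries of $M^{(p)}$ lie in $\mathbb F_p[t]$.
   Context: The Cartier operator on $H^0(C,\Omega^1_C)$ is defined by $\mathscr C(d\varphi+\eta^p x^{p-1}dx)=\eta\,dx$ (every differential can be written in this form); it is $1/p$-linear. The Cartier–Manin matrix is its matrix with respect to a chosen basis (column $j$ = coordinates of the image of the $j$-th basis vector). $M^{(p)}$ denotes the matrix obtained by raising each entry of $M$ to the $p$-th power. *)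

theory Defs
  imports "HOL-Computational_Algebra.Polynomial" "HOL-Computational_Algebra.Primes"
begin

definition Fp_poly_at :: "'k::field \<Rightarrow> 'k set" where
  "Fp_poly_at t = {poly (map_poly of_int P) t | P :: int poly. True}"

text \<open>The field 'k (with distinguished element t) is the perfect closure of F_p(t):
  characteristic p, perfect, t transcendental over F_p, and every element is a
  p^n-th root of an element of F_p(t).\<close>
definition is_perfect_closure_Fpt :: "nat \<Rightarrow> 'k::field \<Rightarrow> bool" where
  "is_perfect_closure_Fpt p t \<longleftrightarrow>
     CHAR('k) = p \<and> prime p \<and>
     surj (\<lambda>a::'k. a ^ p) \<and>
     (\<forall>P :: int poly. poly (map_poly of_int P) t = 0 \<longrightarrow> (\<forall>i. int p dvd coeff P i)) \<and>
     (\<forall>a::'k. \<exists>n P Q. poly (map_poly of_int Q) t \<noteq> (0::'k) \<and>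
        a ^ (p ^ n) = poly (map_poly of_int (P :: int poly)) t / poly (map_poly of_int (Q :: int poly)) t)"

text \<open>'L is the function field K(x,y) of the curve y^2 = F(x) over the field K = 'k
  (embedded via iota), and D = d/dx is the K-linear derivation of L with D x = 1,
  so that a differential on the curve is h dx with h in L, and d phi = (D phi) dx.\<close>
definition is_hyperelliptic_function_field ::
  "('k::field \<Rightarrow> 'L::field) \<Rightarrow> 'k poly \<Rightarrow> 'L \<Rightarrow> 'L \<Rightarrow> ('L \<Rightarrow> 'L) \<Rightarrow> bool" where
  "is_hyperelliptic_function_field \<iota> F x y D \<longleftrightarrow>
     inj \<iota> \<and> \<iota> 1 = 1 \<and>
     (\<forall>a b. \<iota> (a + b) = \<iota> a + \<iota> b) \<and> (\<forall>a b. \<iota> (a * b) = \<iota> a * \<iota> b) \<and>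
     (\<forall>P. P \<noteq> 0 \<longrightarrow> poly (map_poly \<iota> P) x \<noteq> 0) \<and>
     y ^ 2 = poly (map_poly \<iota> F) x \<and>
     (\<forall>z. \<exists>P Q R. R \<noteq> 0 \<and>
        z = (poly (map_poly \<iota> P) x + poly (map_poly \<iota> Q) x * y) / poly (map_poly \<iota> R) x) \<and>
     (\<forall>a b. D (a + b) = D a + D b) \<and> (\<forall>a b. D (a * b) = a * D b + b * D a) \<and>
     (\<forall>c. D (\<iota> c) = 0) \<and> D x = 1"

text \<open>Cartier operator on differentials h dx:  C(d phi + eta^p x^(p-1) dx) = eta dx.
  Returned is the coefficient eta of dx.\<close>
definition cartier :: "('L::field \<Rightarrow> 'L) \<Rightarrow> 'L \<Rightarrow> nat \<Rightarrow> 'L \<Rightarrow> 'L" where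
  "cartier D x p h = (THE \<eta>. \<exists>\<phi>. h = D \<phi> + \<eta> ^ p * x ^ (p - 1))"

end

theory Submission
  imports Defs "HOL-Computational_Algebra.Formal_Power_Series"
begin

text \<open>Let \<open>n = (p - 1)/2\<close>. Since \<open>x^i/y = x^i F(x)^n / y^p\<close> and D kills p-th powers, the
  Cartier image of \<open>x^i dx/y\<close> is read off from the coefficients of \<open>x^(p-1)\<close> and
  \<open>x^(2p-1)\<close> in \<open>x^i F^n\<close> (Manin's formula): the rest of \<open>x^i F^n\<close> is a derivative, and
  \<open>x^(p-1) dx\<close> is not exact because L is spanned by \<open>1, x, ..., x^(p-1)\<close> over the
  constants of D.

  Here \<open>F = h + 2 - 4t\<close> with \<open>h = x^5 - 5x^3 + 5x\<close> the Dickson polynomial, so that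
  \<open>h(u + 1/u) = u^5 + u^-5\<close>. Expanding \<open>F^n\<close> binomially reduces the vanishing of an entry
  to p dividing a coefficient of every \<open>h^m\<close>, \<open>m \<le> n\<close>. Inverting the substitution
  \<open>x = u + 1/u\<close> writes that coefficient as a sum of binomial coefficients times coefficients
  of \<open>(1 + u^10)^m\<close>; for the relevant exponents each term is divisible by p, either by Lucas'
  theorem or because the exponent of u it involves is not a multiple of 5. Which exponents are
  relevant depends on \<open>p mod 5\<close>.\<close>

lemma additive_map_zero:
  fixes f :: "'a::comm_ring_1 \<Rightarrow> 'b::comm_ring_1"
  assumes "\<And>a b. f (a + b) = f a + f b"
  shows "f 0 = 0"
  using assms[of 0 0] by simp

lemma map_poly_hom_add:
  fixes f :: "'a::comm_ring_1 \<Rightarrow> 'b::comm_ring_1"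
  assumes "\<And>a b. f (a + b) = f a + f b"
  shows "map_poly f (P + Q) = map_poly f P + map_poly f Q"
  using additive_map_zero[of f, OF assms] by (intro poly_eqI) (simp add: coeff_map_poly assms)

lemma map_poly_hom_mult:
  fixes f :: "'a::comm_ring_1 \<Rightarrow> 'b::comm_ring_1"
  assumes add: "\<And>a b. f (a + b) = f a + f b" and mult: "\<And>a b. f (a * b) = f a * f b"
  shows "map_poly f (P * Q) = map_poly f P * map_poly f Q"
proof (induction P)
  case (pCons a P)
  have f0: "f 0 = 0" by (rule additive_map_zero[OF add])
  have "map_poly f (pCons a P * Q) = map_poly f (smult a Q) + map_poly f (pCons 0 (P * Q))"
    by (simp add: map_poly_hom_add[OF add])
  also have "\<dots> = smult (f a) (map_poly f Q) + pCons 0 (map_poly f P * map_poly f Q)"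
    using pCons.IH f0 by (simp add: map_poly_smult mult map_poly_pCons)
  also have "\<dots> = map_poly f (pCons a P) * map_poly f Q"
    using f0 by (simp add: map_poly_pCons)
  finally show ?case .
qed simp

lemma map_poly_hom_power:
  fixes f :: "'a::comm_ring_1 \<Rightarrow> 'b::comm_ring_1"
  assumes "\<And>a b. f (a + b) = f a + f b" "\<And>a b. f (a * b) = f a * f b" "f 1 = 1"
  shows "map_poly f (P ^ n) = map_poly f P ^ n"
  by (induction n) (simp_all add: assms map_poly_hom_mult[OF assms(1,2)])

lemma map_poly_hom_sum:
  fixes f :: "'a::comm_ring_1 \<Rightarrow> 'b::comm_ring_1"
  assumes "\<And>a b. f (a + b) = f a + f b"
  shows "map_poly f (\<Sum>i\<in>A. g i) = (\<Sum>i\<in>A. map_poly f (g i))"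
  by (induction A rule: infinite_finite_induct) (simp_all add: map_poly_hom_add[OF assms])

lemmas map_poly_of_int_add = map_poly_hom_add[OF of_int_add]
lemmas map_poly_of_int_mult = map_poly_hom_mult[OF of_int_add of_int_mult]
lemmas map_poly_of_int_power = map_poly_hom_power[OF of_int_add of_int_mult of_int_1]
lemmas map_poly_of_int_sum = map_poly_hom_sum[OF of_int_add]

section \<open>The substitution x = u + 1/u\<close>

text \<open>For \<open>degree f \<le> d\<close> this is \<open>u^d f(u + 1/u)\<close>; the factor \<open>u^d\<close> clears denominators.\<close>
definition joukowski :: "nat \<Rightarrow> 'a::comm_ring_1 poly \<Rightarrow> 'a poly" where
  "joukowski d f = (\<Sum>i\<le>d. smult (coeff f i) ([:1, 0, 1:] ^ i * monom 1 (d - i)))"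

lemma coeff_one_plus_X2_power:
  "coeff ([:1, 0, 1:] ^ i :: 'a::comm_ring_1 poly) r = (if even r then of_nat (i choose (r div 2)) else 0)"
proof -
  have "[:1, 0, 1:] = monom (1::'a) 2 + 1"
    by (simp add: monom_altdef power2_eq_square one_pCons)
  then have "[:1, 0, 1:] ^ i = (\<Sum>k\<le>i. of_nat (i choose k) * monom (1::'a) 2 ^ k * 1 ^ (i - k))"
    by (simp only: binomial_ring)
  also have "\<dots> = (\<Sum>k\<le>i. monom (of_nat (i choose k)) (2 * k))"
    by (intro sum.cong refl) (simp add: monom_power of_nat_poly smult_monom mult.commute)
  finally have "coeff ([:1, 0, 1:] ^ i :: 'a poly) r = (\<Sum>k\<le>i. if 2 * k = r then of_nat (i choose k) else 0)"
    by (simp add: coeff_sum coeff_monom)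
  also have "\<dots> = (\<Sum>k\<le>i. if k = r div 2 then (if even r then of_nat (i choose k) else 0) else 0)"
    by (intro sum.cong refl) auto
  also have "\<dots> = (if even r then of_nat (i choose (r div 2)) else 0)"
    by (simp add: sum.delta binomial_eq_0)
  finally show ?thesis .
qed

lemma coeff_joukowski:
  "coeff (joukowski d f) (d + e) = (\<Sum>i\<le>d. coeff f i * coeff ([:1, 0, 1:] ^ i) (i + e))"
  unfolding joukowski_def coeff_sum coeff_smult
proof (intro sum.cong refl)
  fix i assume "i \<in> {..d}"
  then have "d + e = (i + e) + (d - i)" by simp
  then show "coeff f i * coeff ([:1, 0, 1:] ^ i * monom 1 (d - i)) (d + e)
      = coeff f i * coeff ([:1, 0, 1:] ^ i) (i + e)"
    by (simp only: mult.commute[of "[:1, 0, 1:] ^ i"] coeff_monom_mult) (simp add: add.commute)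
qed

lemma poly_joukowski:
  fixes f :: "'a::field poly"
  assumes "degree f \<le> d" "u \<noteq> 0"
  shows "poly (joukowski d f) u = u ^ d * poly f ((u\<^sup>2 + 1) / u)"
proof -
  have "poly (joukowski d f) u = (\<Sum>i\<le>d. coeff f i * ((1 + u * u) ^ i * u ^ (d - i)))"
    by (simp add: joukowski_def poly_sum poly_monom)
  also have "\<dots> = (\<Sum>i\<le>d. u ^ d * (coeff f i * ((u\<^sup>2 + 1) / u) ^ i))"
  proof (intro sum.cong refl)
    fix i assume "i \<in> {..d}"
    then have "u ^ d = u ^ i * u ^ (d - i)" by (simp add: power_add[symmetric])
    then show "coeff f i * ((1 + u * u) ^ i * u ^ (d - i)) = u ^ d * (coeff f i * ((u\<^sup>2 + 1) / u) ^ i)"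
      using assms(2) by (simp add: power_divide power2_eq_square field_simps)
  qed
  also have "\<dots> = u ^ d * poly f ((u\<^sup>2 + 1) / u)"
    unfolding poly_altdef sum_distrib_left[symmetric] using assms(1)
    by (intro arg_cong[where f = "(*) _"] sum.mono_neutral_right) (auto simp: coeff_eq_0)
  finally show ?thesis .
qed

lemma map_poly_of_int_joukowski:
  "map_poly of_int (joukowski d f) = joukowski d (map_poly (of_int :: int \<Rightarrow> 'a::comm_ring_1) f)"
  by (simp add: joukowski_def map_poly_of_int_sum map_poly_smult map_poly_of_int_mult
      map_poly_of_int_power map_poly_monom map_poly_pCons coeff_map_poly)

lemma sum_alternating_choose_Vandermonde:
  assumes "k + 1 \<le> M"
  shows "(\<Sum>j\<le>q. (-1) ^ j * int ((k + j) choose j) * int (M choose (q - j))) = int ((M - k - 1) choose q)"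
proof -
  have neg: "(- 1 - real k) gchoose j = (-1) ^ j * of_nat ((k + j) choose j)" for j
  proof -
    have "(- 1 - real k) gchoose j = (-1) ^ j * ((of_nat j - (- 1 - real k) - 1) gchoose j)"
      by (rule gbinomial_negated_upper)
    also have "of_nat j - (- 1 - real k) - 1 = of_nat (k + j)" by simp
    finally show ?thesis by (simp add: binomial_gbinomial)
  qed
  have "real_of_int (\<Sum>j\<le>q. (-1) ^ j * int ((k + j) choose j) * int (M choose (q - j)))
      = (\<Sum>j=0..q. ((- 1 - real k) gchoose j) * (of_nat M gchoose (q - j)))"
    by (simp add: neg binomial_gbinomial atLeast0AtMost mult.assoc)
  also have "\<dots> = (- 1 - real k + of_nat M) gchoose q"
    by (rule gbinomial_Vandermonde)
  also have "- 1 - real k + of_nat M = of_nat (M - k - 1)"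
    using assms by simp
  finally show ?thesis
    by (simp add: binomial_gbinomial flip: of_int_eq_iff[where 'a = real])
qed

lemma sum_alternating_choose_mult_choose:
  assumes "q \<le> d" "k + 1 \<le> c + q"
  shows "(\<Sum>j\<le>d. (-1) ^ j * int ((k + j) choose j) * int ((c + q) choose (c + j)))
    = int ((c + q - k - 1) choose q)"
proof -
  have "(\<Sum>j\<le>d. (-1) ^ j * int ((k + j) choose j) * int ((c + q) choose (c + j)))
      = (\<Sum>j\<le>q. (-1) ^ j * int ((k + j) choose j) * int ((c + q) choose (c + j)))"
    using assms(1) by (intro sum.mono_neutral_right) (auto simp: binomial_eq_0)
  also have "\<dots> = (\<Sum>j\<le>q. (-1) ^ j * int ((k + j) choose j) * int ((c + q) choose (q - j)))"
  proof (intro sum.cong refl)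
    fix j assume "j \<in> {..q}"
    then have "(c + q) choose (c + j) = (c + q) choose (c + q - (c + j))"
      by (intro binomial_symmetric) simp
    then show "(-1) ^ j * int ((k + j) choose j) * int ((c + q) choose (c + j))
        = (-1) ^ j * int ((k + j) choose j) * int ((c + q) choose (q - j))"
      by simp
  qed
  also have "\<dots> = int ((c + q - k - 1) choose q)"
    using assms(2) by (rule sum_alternating_choose_Vandermonde)
  finally show ?thesis .
qed

lemma sum_alternating_choose_mult_choose_diff:
  assumes "0 < r" "r \<le> d"
  shows "(\<Sum>j\<le>d. (-1) ^ j * int ((k + j) choose j) *
    (int ((k + 2 * r) choose (k + r + j)) - int ((k + 2 * r) choose (k + r + 1 + j)))) = 0"
proof -
  have "(\<Sum>j\<le>d. (-1) ^ j * int ((k + j) choose j) * int ((k + 2 * r) choose (k + r + j)))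
      = int ((2 * r - 1) choose r)"
    using assms sum_alternating_choose_mult_choose[of r d k "k + r"] by (simp add: mult_2 add.assoc)
  moreover have "(\<Sum>j\<le>d. (-1) ^ j * int ((k + j) choose j) * int ((k + 2 * r) choose (k + r + 1 + j)))
      = int ((2 * r - 1) choose (r - 1))"
    using assms sum_alternating_choose_mult_choose[of "r - 1" d k "k + r + 1"] by (simp add: mult_2 add.assoc)
  moreover have "(2 * r - 1) choose r = (2 * r - 1) choose (r - 1)"
    using assms binomial_symmetric[of r "2 * r - 1"] by simp
  ultimately show ?thesis
    by (simp add: right_diff_distrib sum_subtractf)
qed

lemma joukowski_inversion_kernel:
  assumes "i \<le> d"
  shows "(\<Sum>j\<le>d. (-1) ^ j * int ((k + j) choose j) *
      (coeff ([:1, 0, 1:] ^ i) (i + k + 2 * j) - coeff ([:1, 0, 1:] ^ i) (i + k + 2 * j + 2)))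
    = (if i = k then 1 else 0)"
proof (cases "even (i + k) \<and> k \<le> i")
  case False
  have "coeff ([:1, 0, 1:] ^ i :: int poly) (i + k + 2 * j + s) = 0" if "even s" for j s
  proof (cases "even (i + k)")
    case True
    then have "i < (i + k + 2 * j + s) div 2"
      using False that by presburger
    then show ?thesis
      by (simp add: coeff_one_plus_X2_power binomial_eq_0)
  qed (use that in \<open>simp add: coeff_one_plus_X2_power\<close>)
  from this[where s = 0] this[where s = 2]
  have "coeff ([:1, 0, 1:] ^ i :: int poly) (i + k + 2 * j) = 0"
    "coeff ([:1, 0, 1:] ^ i :: int poly) (i + k + 2 * j + 2) = 0" for j
    by simp_all
  moreover have "i \<noteq> k"
    using False by auto
  ultimately show ?thesis
    by simp
next
  case True
  then have "even (i - k)"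
    by auto
  then obtain r where r: "i = k + 2 * r"
    using True by (metis evenE le_add_diff_inverse)
  have "i + k + 2 * j = 2 * (k + r + j)" "i + k + 2 * j + 2 = 2 * (k + r + 1 + j)" for j
    using r by simp_all
  then have coeffs: "coeff ([:1, 0, 1:] ^ i) (i + k + 2 * j) = int ((k + 2 * r) choose (k + r + j))"
      "coeff ([:1, 0, 1:] ^ i) (i + k + 2 * j + 2) = int ((k + 2 * r) choose (k + r + 1 + j))" for j
    by (simp_all only:) (simp_all add: coeff_one_plus_X2_power r)
  show ?thesis
  proof (cases "r = 0")
    case True
    then have "(-1) ^ j * int ((k + j) choose j) * (int ((k + 2 * r) choose (k + r + j))
        - int ((k + 2 * r) choose (k + r + 1 + j))) = (if j = 0 then 1 else 0)" for j
      by (auto simp: binomial_eq_0)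
    then show ?thesis
      unfolding coeffs using True r by (simp add: sum.delta)
  next
    case False
    then show ?thesis
      unfolding coeffs using assms r sum_alternating_choose_mult_choose_diff[of r d k] by simp
  qed
qed

text \<open>The weights \<open>(-1)^j (k+j choose j)\<close> are the coefficients of \<open>(1 + u^2)^-(k+1)\<close>.\<close>
lemma coeff_eq_sum_coeff_joukowski:
  fixes f :: "int poly"
  assumes "degree f \<le> d"
  shows "coeff f k = (\<Sum>j\<le>d. (-1) ^ j * int ((k + j) choose j) *
    (coeff (joukowski d f) (d + k + 2 * j) - coeff (joukowski d f) (d + k + 2 * j + 2)))"
proof -
  let ?g = "\<lambda>i r. coeff ([:1, 0, 1:] ^ i :: int poly) r"
  have "(\<Sum>j\<le>d. (-1) ^ j * int ((k + j) choose j) *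
      (coeff (joukowski d f) (d + k + 2 * j) - coeff (joukowski d f) (d + k + 2 * j + 2)))
    = (\<Sum>j\<le>d. \<Sum>i\<le>d. coeff f i * ((-1) ^ j * int ((k + j) choose j) *
        (?g i (i + k + 2 * j) - ?g i (i + k + 2 * j + 2))))"
    using coeff_joukowski[of d f "k + 2 * j" for j] coeff_joukowski[of d f "k + 2 * j + 2" for j]
    by (simp add: add.assoc sum_subtractf[symmetric] sum_distrib_left algebra_simps)
  also have "\<dots> = (\<Sum>i\<le>d. coeff f i * (\<Sum>j\<le>d. (-1) ^ j * int ((k + j) choose j) *
        (?g i (i + k + 2 * j) - ?g i (i + k + 2 * j + 2))))"
    by (subst sum.swap) (simp add: sum_distrib_left)
  also have "\<dots> = (\<Sum>i\<le>d. if i = k then coeff f k else 0)"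
  proof (intro sum.cong refl)
    fix i assume "i \<in> {..d}"
    then show "coeff f i * (\<Sum>j\<le>d. (-1) ^ j * int ((k + j) choose j) *
        (?g i (i + k + 2 * j) - ?g i (i + k + 2 * j + 2))) = (if i = k then coeff f k else 0)"
      using joukowski_inversion_kernel[of i d k] by simp
  qed
  also have "\<dots> = coeff f k"
    using assms by (auto simp: sum.delta coeff_eq_0)
  finally show ?thesis by simp
qed

lemma poly_eqI_nonzero:
  fixes A B :: "'a::field_char_0 poly"
  assumes "\<And>u. u \<noteq> 0 \<Longrightarrow> poly A u = poly B u"
  shows "A = B"
proof (rule ccontr)
  assume "A \<noteq> B"
  then have "finite {u. poly (A - B) u = 0}"
    by (intro poly_roots_finite) simp
  moreover have "UNIV - {0} \<subseteq> {u. poly (A - B) u = 0}"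
    using assms by auto
  ultimately show False
    using infinite_UNIV_char_0[where 'a = 'a] by (auto dest: finite_subset)
qed

section \<open>Coefficients of powers of the Dickson polynomial\<close>

definition dickson5 :: "int poly" where
  "dickson5 = [:0, 5, 0, -5, 0, 1:]"

lemma degree_dickson5_power: "degree (dickson5 ^ m) \<le> 5 * m"
  using degree_power_le[of dickson5 m] by (simp add: dickson5_def)

lemma joukowski_dickson5_power: "joukowski (5 * m) (dickson5 ^ m) = (1 + monom 1 10) ^ m"
proof -
  let ?h = "map_poly (of_int :: int \<Rightarrow> real) dickson5"
  have h: "?h = [:0, 5, 0, -5, 0, 1:]"
    by (simp add: dickson5_def map_poly_pCons)
  have "joukowski (5 * m) (?h ^ m) = (1 + monom 1 10) ^ m"
  proof (rule poly_eqI_nonzero)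
    fix u :: real assume u: "u \<noteq> 0"
    have dickson: "u ^ 5 * poly ?h ((u\<^sup>2 + 1) / u) = u ^ 10 + 1"
      unfolding h using u by (simp add: field_simps) algebra
    have "degree (?h ^ m) \<le> 5 * m"
      using degree_power_le[of ?h m] h by simp
    then have "poly (joukowski (5 * m) (?h ^ m)) u = (u ^ 5 * poly ?h ((u\<^sup>2 + 1) / u)) ^ m"
      using u by (simp add: poly_joukowski power_mult power_mult_distrib)
    also have "\<dots> = poly ((1 + monom 1 10) ^ m) u"
      by (simp only: dickson) (simp add: poly_monom add.commute)
    finally show "poly (joukowski (5 * m) (?h ^ m)) u = poly ((1 + monom 1 10) ^ m) u" .
  qed
  then have "map_poly of_int (joukowski (5 * m) (dickson5 ^ m))
      = (map_poly of_int ((1 + monom 1 10) ^ m) :: real poly)"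
    by (simp add: map_poly_of_int_joukowski map_poly_of_int_power map_poly_of_int_add map_poly_monom)
  then show ?thesis
    by (metis coeff_map_poly of_int_0 of_int_eq_iff poly_eqI)
qed

lemma coeff_one_plus_X10_power_eq_0:
  assumes "\<not> 10 dvd e \<or> 10 * m < e"
  shows "coeff ((1 + monom (1::int) 10) ^ m) e = 0"
proof -
  have "(1 + monom (1::int) 10) ^ m = (\<Sum>l\<le>m. of_nat (m choose l) * monom 1 10 ^ l * 1 ^ (m - l))"
    by (simp only: add.commute[of 1] binomial_ring)
  also have "\<dots> = (\<Sum>l\<le>m. monom (of_nat (m choose l)) (10 * l))"
    by (intro sum.cong refl) (simp add: monom_power of_nat_poly smult_monom mult.commute)
  finally show ?thesis
    using assms by (auto simp: coeff_sum coeff_monom intro!: sum.neutral)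
qed

lemma coeff_dickson5_power:
  "coeff (dickson5 ^ m) k = (\<Sum>j\<le>5 * m. (-1) ^ j * int ((k + j) choose j) *
     (coeff ((1 + monom 1 10) ^ m) (5 * m + k + 2 * j) - coeff ((1 + monom 1 10) ^ m) (5 * m + k + 2 * j + 2)))"
  using coeff_eq_sum_coeff_joukowski[OF degree_dickson5_power] by (simp add: joukowski_dickson5_power)

lemma prime_dvd_choose_mult_add:
  assumes "prime p" "a < b" "b < p"
  shows "p dvd ((c * p + a) choose b)"
proof (induction c)
  case 0
  then show ?case using assms by (simp add: binomial_eq_0)
next
  case (Suc c)
  have "(Suc c * p + a) choose b = (\<Sum>i\<le>b. (p choose i) * ((c * p + a) choose (b - i)))"
    by (simp add: vandermonde add.assoc)
  also have "p dvd \<dots>"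
  proof (rule dvd_sum)
    fix i assume "i \<in> {..b}"
    then have "i = 0 \<or> p dvd (p choose i)"
      using assms by (auto intro: dvd_choose_prime)
    then show "p dvd (p choose i) * ((c * p + a) choose (b - i))"
      using Suc.IH by auto
  qed
  finally show ?case .
qed

text \<open>In the expansion of \<open>coeff_dickson5_power\<close>, the binomial factor is divisible by p
  (Lucas) for \<open>i < j < p\<close>; for the other j the exponents of u are either not multiples of 10
  or beyond the degree \<open>10 m\<close> of \<open>(1 + u^10)^m\<close>.\<close>
lemma prime_dvd_coeff_dickson5_power:
  fixes p m k i c :: nat
  assumes "prime p" and "k + i + 1 = c * p" and "5 * m < k + 2 * p"
    and "\<And>j. j \<le> i \<Longrightarrow> \<not> 5 dvd (k + 2 * j) \<and> \<not> 5 dvd (k + 2 * j + 2)"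
  shows "int p dvd coeff (dickson5 ^ m) k"
  unfolding coeff_dickson5_power
proof (rule dvd_sum)
  let ?P = "coeff ((1 + monom (1::int) 10) ^ m)"
  fix j
  show "int p dvd (-1) ^ j * int ((k + j) choose j) * (?P (5 * m + k + 2 * j) - ?P (5 * m + k + 2 * j + 2))"
  proof (cases "j \<le> i \<or> p \<le> j")
    case True
    have "\<not> 10 dvd (5 * m + k + 2 * j) \<or> 10 * m < 5 * m + k + 2 * j"
      "\<not> 10 dvd (5 * m + k + 2 * j + 2) \<or> 10 * m < 5 * m + k + 2 * j + 2"
    proof -
      consider "\<not> 5 dvd (k + 2 * j)" "\<not> 5 dvd (k + 2 * j + 2)" | "10 * m < 5 * m + k + 2 * j"
        using True assms(3,4) by fastforce
      then show "\<not> 10 dvd (5 * m + k + 2 * j) \<or> 10 * m < 5 * m + k + 2 * j"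
        "\<not> 10 dvd (5 * m + k + 2 * j + 2) \<or> 10 * m < 5 * m + k + 2 * j + 2"
        by (cases; presburger)+
    qed
    then show ?thesis
      by (simp add: coeff_one_plus_X10_power_eq_0)
  next
    case False
    then have "k + j = c * p + (j - i - 1)"
      using assms(2) by simp
    then have "p dvd ((k + j) choose j)"
      using False prime_dvd_choose_mult_add[OF assms(1), of "j - i - 1" j c] by simp
    then show ?thesis
      by (simp add: int_dvd_int_iff)
  qed
qed

section \<open>The curves y^2 = h(x) + a over F_p[t]\<close>

lemma Fp_poly_at_iff: "a \<in> Fp_poly_at t \<longleftrightarrow> (\<exists>P. a = poly (map_poly of_int P) t)"
  by (auto simp: Fp_poly_at_def)

lemma Fp_poly_at_add: "a \<in> Fp_poly_at t \<Longrightarrow> b \<in> Fp_poly_at t \<Longrightarrow> a + b \<in> Fp_poly_at t"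
  unfolding Fp_poly_at_iff by (metis map_poly_of_int_add poly_add)

lemma Fp_poly_at_mult: "a \<in> Fp_poly_at t \<Longrightarrow> b \<in> Fp_poly_at t \<Longrightarrow> a * b \<in> Fp_poly_at t"
  unfolding Fp_poly_at_iff by (metis map_poly_of_int_mult poly_mult)

lemma Fp_poly_at_of_int: "of_int c \<in> Fp_poly_at t"
  unfolding Fp_poly_at_iff by (intro exI[of _ "[:c:]"]) (simp add: map_poly_pCons)

lemma Fp_poly_at_of_nat: "of_nat c \<in> Fp_poly_at t"
  using Fp_poly_at_of_int[of "int c" t] by simp

lemma Fp_poly_at_sum: "(\<And>i. i \<in> A \<Longrightarrow> f i \<in> Fp_poly_at t) \<Longrightarrow> sum f A \<in> Fp_poly_at t"
  using Fp_poly_at_of_int[of 0 t]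
  by (induction A rule: infinite_finite_induct) (auto intro: Fp_poly_at_add)

lemma Fp_poly_at_power: "a \<in> Fp_poly_at t \<Longrightarrow> a ^ n \<in> Fp_poly_at t"
  using Fp_poly_at_of_int[of 1 t]
  by (induction n) (auto intro: Fp_poly_at_mult)

lemma coeff_const_plus_dickson5_power:
  fixes a :: "'a::comm_ring_1"
  shows "coeff (([:a:] + map_poly of_int dickson5) ^ n) k =
    (\<Sum>m\<le>n. of_nat (n choose m) * a ^ (n - m) * of_int (coeff (dickson5 ^ m) k))"
proof -
  have "([:a:] + map_poly of_int dickson5) ^ n
      = (\<Sum>m\<le>n. of_nat (n choose m) * map_poly of_int dickson5 ^ m * [:a:] ^ (n - m))"
    by (simp only: add.commute[of "[:a:]"] binomial_ring)
  also have "\<dots> = (\<Sum>m\<le>n. smult (of_nat (n choose m) * a ^ (n - m)) (map_poly of_int (dickson5 ^ m)))"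
    by (intro sum.cong refl) (simp add: map_poly_of_int_power of_nat_poly poly_const_pow mult_ac)
  finally show ?thesis
    by (simp add: coeff_sum coeff_map_poly mult.assoc)
qed

lemma coeff_const_plus_dickson5_power_in_Fp_poly_at:
  assumes "a \<in> Fp_poly_at t"
  shows "coeff (([:a:] + map_poly of_int dickson5) ^ n) k \<in> Fp_poly_at t"
  unfolding coeff_const_plus_dickson5_power
  by (intro Fp_poly_at_sum Fp_poly_at_mult Fp_poly_at_power Fp_poly_at_of_nat Fp_poly_at_of_int assms)

lemma coeff_const_plus_dickson5_power_eq_0:
  fixes a :: "'a::comm_ring_1"
  assumes "\<And>m. m \<le> n \<Longrightarrow> int CHAR('a) dvd coeff (dickson5 ^ m) k"
  shows "coeff (([:a:] + map_poly of_int dickson5) ^ n) k = 0"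
  unfolding coeff_const_plus_dickson5_power
proof (intro sum.neutral ballI)
  fix m assume "m \<in> {..n}"
  then have "(of_int (coeff (dickson5 ^ m) k) :: 'a) = 0"
    using assms by (auto simp: of_int_eq_0_iff_char_dvd)
  then show "of_nat (n choose m) * a ^ (n - m) * of_int (coeff (dickson5 ^ m) k) = 0"
    by simp
qed

section \<open>Derivations\<close>

locale derivation =
  fixes D :: "'a::field \<Rightarrow> 'a"
  assumes D_add: "D (u + v) = D u + D v"
    and D_mult: "D (u * v) = u * D v + v * D u"
begin

lemma D_0: "D 0 = 0"
  using D_add[of 0 0] by (metis add_0 add_cancel_right_right)

lemma D_1: "D 1 = 0"
  using D_mult[of 1 1] by (metis mult_1 add_cancel_right_right)

lemma D_minus: "D (- u) = - D u"
  using D_add[of u "- u"] by (simp add: D_0 eq_neg_iff_add_eq_0 add.commute)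

lemma D_diff: "D (u - v) = D u - D v"
  using D_add[of u "- v"] by (simp add: D_minus)

lemma D_of_nat: "D (of_nat n) = 0"
  by (induction n) (simp_all add: D_0 D_1 D_add)

lemma D_sum: "D (\<Sum>j\<in>A. f j) = (\<Sum>j\<in>A. D (f j))"
  by (induction A rule: infinite_finite_induct) (simp_all add: D_0 D_add)

lemma D_power: "D (u ^ k) = of_nat k * u ^ (k - 1) * D u"
proof (induction k)
  case (Suc k)
  then show ?case
    by (cases k) (simp_all add: D_mult algebra_simps)
qed (simp add: D_1)

lemma D_power_CHAR: "D (u ^ CHAR('a)) = 0"
  by (simp add: D_power)

lemma D_constant_mult_power:
  assumes "D c = 0" "D x = 1"
  shows "D (c * x ^ j) = of_nat j * c * x ^ (j - 1)"
  using assms by (simp add: D_mult D_power)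

lemma constant_combination_of_powers_eq_0:
  assumes "D x = 1" "d < CHAR('a)" "\<And>j. j \<le> d \<Longrightarrow> D (c j) = 0" "(\<Sum>j\<le>d. c j * x ^ j) = 0"
    and "j \<le> d"
  shows "c j = 0"
  using assms(2-)
proof (induction d arbitrary: c j)
  case (Suc d)
  let ?c' = "\<lambda>j. of_nat (Suc j) * c (Suc j)"
  have "0 = D (\<Sum>j\<le>Suc d. c j * x ^ j)"
    using Suc.prems(3) D_0 by simp
  also have "\<dots> = (\<Sum>j\<le>Suc d. of_nat j * c j * x ^ (j - 1))"
    unfolding D_sum using Suc.prems(2) assms(1) by (intro sum.cong refl) (simp add: D_constant_mult_power)
  also have "\<dots> = (\<Sum>j\<le>d. ?c' j * x ^ j)"
    by (subst sum.atMost_Suc_shift) (simp add: mult_ac)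
  finally have "?c' j = 0" if "j \<le> d" for j
    using Suc.prems(1,2) that by (intro Suc.IH[of ?c']) (simp_all add: D_mult D_add D_1 D_of_nat)
  moreover have "(of_nat (Suc j) :: 'a) \<noteq> 0" if "j \<le> d" for j
  proof -
    have "Suc j < CHAR('a)"
      using that Suc.prems(1) by simp
    then have "\<not> CHAR('a) dvd Suc j"
      by (intro nat_dvd_not_less) simp_all
    then show ?thesis
      by (metis of_nat_eq_0_iff_char_dvd)
  qed
  ultimately have high: "c (Suc j) = 0" if "j \<le> d" for j
    using that by simp
  have "(\<Sum>j\<le>Suc d. c j * x ^ j) = c 0"
    using high by (simp add: sum.atMost_Suc_shift del: sum.atMost_Suc)
  then have "c 0 = 0"
    using Suc.prems(3) by simp
  then show ?case
    using high Suc.prems(4) by (cases j) auto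
qed simp

end

lemma exists_pderiv_eq:
  fixes H :: "'a::field poly"
  assumes "\<And>k. of_nat (Suc k) = (0::'a) \<Longrightarrow> coeff H k = 0"
  shows "\<exists>\<Psi>. H = pderiv \<Psi>"
proof
  define \<Psi> where "\<Psi> = (\<Sum>l\<le>degree H. monom (coeff H l / of_nat (Suc l)) (Suc l))"
  have "coeff \<Psi> (Suc k) = (if k \<le> degree H then coeff H k / of_nat (Suc k) else 0)" for k
    by (simp add: \<Psi>_def coeff_sum coeff_monom)
  then show "H = pderiv \<Psi>"
    using assms by (intro poly_eqI) (auto simp: coeff_pderiv coeff_eq_0)
qed

lemma exists_pderiv_eq_minus_monoms:
  fixes H :: "'a::field poly"
  assumes "CHAR('a) = p" "p > 0" "degree H < 3 * p - 1"
  shows "\<exists>\<Psi>. H = pderiv \<Psi> + monom (coeff H (p - 1)) (p - 1) + monom (coeff H (2 * p - 1)) (2 * p - 1)"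
proof -
  define G where "G = H - monom (coeff H (p - 1)) (p - 1) - monom (coeff H (2 * p - 1)) (2 * p - 1)"
  have "coeff G k = 0" if "of_nat (Suc k) = (0::'a)" for k
  proof -
    have "p dvd Suc k"
      using that assms(1) by (metis of_nat_eq_0_iff_char_dvd)
    then obtain c where c: "Suc k = c * p"
      by (metis dvdE mult.commute)
    have "c \<noteq> 0"
      using c by (metis mult_0 nat.distinct(1))
    then consider "c = 1" | "c = 2" | "c \<ge> 3"
      by linarith
    then show ?thesis
    proof cases
      case 3
      then have "3 * p \<le> c * p"
        by simp
      then have "k > degree H" "k \<noteq> p - 1" "k \<noteq> 2 * p - 1"
        using c assms(2,3) by linarith+
      then show ?thesis
        by (simp add: G_def coeff_monom coeff_eq_0)
    qed (use c assms(2) in \<open>auto simp: G_def coeff_monom\<close>)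
  qed
  then obtain \<Psi> where "G = pderiv \<Psi>"
    using exists_pderiv_eq by blast
  then show ?thesis
    by (auto simp: G_def algebra_simps)
qed

section \<open>Hyperelliptic function fields in odd characteristic\<close>

lemma inverse_eq_power_mult_inverse_power:
  fixes w :: "'a::field"
  assumes "n > 0"
  shows "inverse w = w ^ (n - 1) * inverse w ^ n"
proof (cases "w = 0")
  case False
  have "w ^ n = w ^ (n - 1) * w"
    using assms by (simp add: power_Suc2[symmetric])
  then show ?thesis
    using False by (simp add: power_inverse field_simps)
qed (use assms in simp)

text \<open>Manin's formula reads \<open>C(x^i dx/y) = (\<Sum>c. m_ci x^(c-1)) dx/y\<close> with
  \<open>m_ci^p = cartier_manin_coeff F p i c\<close>, the coefficient of \<open>x^(cp-1)\<close> in \<open>x^i F^((p-1)/2)\<close>;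
  so this is the entry of \<open>M^(p)\<close> in row c and column \<open>i + 1\<close>.\<close>
definition cartier_manin_coeff :: "'k::field poly \<Rightarrow> nat \<Rightarrow> nat \<Rightarrow> nat \<Rightarrow> 'k" where
  "cartier_manin_coeff F p i c = coeff (F ^ ((p - 1) div 2)) (c * p - 1 - i)"

locale hyperelliptic_function_field =
  fixes \<iota> :: "'k::field \<Rightarrow> 'L::field" and F :: "'k poly" and x y :: 'L and D :: "'L \<Rightarrow> 'L"
    and p :: nat
  assumes function_field: "is_hyperelliptic_function_field \<iota> F x y D"
    and CHAR_k: "CHAR('k) = p" and prime_p: "prime p" and p_not_2: "p \<noteq> 2"
    and F_nonzero: "F \<noteq> 0"
begin

lemma
  shows inj_iota: "inj \<iota>" and iota_1: "\<iota> 1 = 1"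
    and iota_add: "\<iota> (a + b) = \<iota> a + \<iota> b" and iota_mult: "\<iota> (a * b) = \<iota> a * \<iota> b"
    and x_transcendental: "P \<noteq> 0 \<Longrightarrow> poly (map_poly \<iota> P) x \<noteq> 0"
    and y_squared: "y\<^sup>2 = poly (map_poly \<iota> F) x"
    and function_field_element: "\<exists>P Q R. R \<noteq> 0 \<and>
      z = (poly (map_poly \<iota> P) x + poly (map_poly \<iota> Q) x * y) / poly (map_poly \<iota> R) x"
    and D_iota: "D (\<iota> c) = 0" and D_x: "D x = 1"
  using function_field unfolding is_hyperelliptic_function_field_def by blast+

sublocale derivation D
  using function_field unfolding is_hyperelliptic_function_field_def by unfold_locales blast+

lemma iota_0: "\<iota> 0 = 0"
  using additive_map_zero[of \<iota>] iota_add by blast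

lemma iota_power: "\<iota> (c ^ k) = \<iota> c ^ k"
  by (induction k) (simp_all add: iota_1 iota_mult)

lemma iota_of_nat: "\<iota> (of_nat n) = of_nat n"
  by (induction n) (simp_all add: iota_0 iota_1 iota_add)

lemma CHAR_L: "CHAR('L) = p"
proof -
  have "(of_nat n :: 'L) = 0 \<longleftrightarrow> (of_nat n :: 'k) = 0" for n
    using inj_iota iota_0 by (metis iota_of_nat injD)
  then show ?thesis
    using CHAR_k by (intro CHAR_eqI) (simp_all add: of_nat_eq_0_iff_char_dvd)
qed

lemma p_gt_2: "p > 2"
  using prime_ge_2_nat[OF prime_p] p_not_2 by linarith

lemma p_minus_1_eq: "p - 1 = 2 * ((p - 1) div 2)"
  using prime_odd_nat[OF prime_p] p_gt_2 by simp

lemma D_power_p: "D (u ^ p) = 0"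
  using D_power_CHAR by (simp add: CHAR_L)

lemma power_p_add: "(u + v :: 'L) ^ p = u ^ p + v ^ p"
  by (rule freshmans_dream) (simp_all add: CHAR_L prime_p)

lemma power_p_diff: "(u - v :: 'L) ^ p = u ^ p - v ^ p"
  using power_p_add[of "u - v" v] by (simp add: algebra_simps)

definition ev :: "'k poly \<Rightarrow> 'L" where
  "ev P = poly (map_poly \<iota> P) x"

lemma ev_add: "ev (P + Q) = ev P + ev Q"
  by (simp add: ev_def map_poly_hom_add[OF iota_add])

lemma ev_mult: "ev (P * Q) = ev P * ev Q"
  by (simp add: ev_def map_poly_hom_mult[OF iota_add iota_mult])

lemma ev_power: "ev (P ^ k) = ev P ^ k"
  by (simp add: ev_def map_poly_hom_power[OF iota_add iota_mult iota_1])

lemma ev_pCons: "ev (pCons a P) = \<iota> a + x * ev P"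
  by (simp add: ev_def map_poly_pCons iota_0)

lemma ev_monom: "ev (monom c k) = \<iota> c * x ^ k"
  by (simp add: ev_def map_poly_monom iota_0 poly_monom)

lemma ev_F: "ev F = y\<^sup>2"
  by (simp add: ev_def y_squared)

lemma ev_nonzero: "P \<noteq> 0 \<Longrightarrow> ev P \<noteq> 0"
  unfolding ev_def by (rule x_transcendental)

lemma D_ev: "D (ev P) = ev (pderiv P)"
proof (induction P)
  case (pCons a P)
  then show ?case
    by (simp add: ev_pCons ev_add D_add D_iota D_mult D_x pderiv_pCons iota_0)
qed (simp add: ev_def D_0)

lemma y_nonzero: "y \<noteq> 0"
  using ev_nonzero[OF F_nonzero] ev_F by auto

lemma y_power_p_minus_1: "y ^ (p - 1) = ev (F ^ ((p - 1) div 2))"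
  by (subst p_minus_1_eq) (simp add: ev_power ev_F power_mult)

definition x_power_span :: "'L set" where
  "x_power_span = {z. \<exists>b. (\<forall>j. D (b j) = 0) \<and> z = (\<Sum>j<p. b j * x ^ j)}"

lemma x_power_span_add: "u \<in> x_power_span \<Longrightarrow> v \<in> x_power_span \<Longrightarrow> u + v \<in> x_power_span"
  unfolding x_power_span_def
proof (elim CollectE exE conjE, intro CollectI)
  fix b b' assume "\<forall>j. D (b j) = 0" "u = (\<Sum>j<p. b j * x ^ j)" "\<forall>j. D (b' j) = 0" "v = (\<Sum>j<p. b' j * x ^ j)"
  then show "\<exists>b''. (\<forall>j. D (b'' j) = 0) \<and> u + v = (\<Sum>j<p. b'' j * x ^ j)"
    by (intro exI[of _ "\<lambda>j. b j + b' j"]) (simp add: D_add sum.distrib algebra_simps)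
qed

lemma x_power_span_constant_mult: "D c = 0 \<Longrightarrow> u \<in> x_power_span \<Longrightarrow> c * u \<in> x_power_span"
  unfolding x_power_span_def
proof (elim CollectE exE conjE, intro CollectI)
  fix b assume "D c = 0" "\<forall>j. D (b j) = 0" "u = (\<Sum>j<p. b j * x ^ j)"
  then show "\<exists>b'. (\<forall>j. D (b' j) = 0) \<and> c * u = (\<Sum>j<p. b' j * x ^ j)"
    by (intro exI[of _ "\<lambda>j. c * b j"]) (simp add: D_mult sum_distrib_left mult_ac)
qed

lemma x_power_span_constant:
  assumes "D c = 0"
  shows "c \<in> x_power_span"
proof -
  have "(\<Sum>j<p. (if j = 0 then c else 0) * x ^ j) = (\<Sum>j<p. if j = 0 then c else 0)"
    by (intro sum.cong) auto
  also have "\<dots> = c"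
    using p_gt_2 by simp
  finally show ?thesis
    unfolding x_power_span_def using assms D_0
    by (intro CollectI exI[of _ "\<lambda>j. if j = 0 then c else 0"]) simp
qed

lemma x_power_span_mult_x:
  assumes "z \<in> x_power_span"
  shows "x * z \<in> x_power_span"
proof -
  obtain b where b: "\<forall>j. D (b j) = 0" "z = (\<Sum>j<p. b j * x ^ j)"
    using assms unfolding x_power_span_def by blast
  obtain q where q: "p = Suc q"
    using p_gt_2 by (cases p) auto
  define b' where "b' j = (if j = 0 then b q * x ^ p else b (j - 1))" for j
  have "(\<Sum>j<p. b' j * x ^ j) = b q * x ^ p + (\<Sum>j<q. b j * x ^ Suc j)"
    unfolding q by (subst sum.lessThan_Suc_shift) (simp add: b'_def q)
  also have "\<dots> = x * z"
    unfolding b(2) by (simp add: q sum_distrib_left distrib_left mult_ac add.commute)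
  finally show ?thesis
    unfolding x_power_span_def using b(1)
    by (intro CollectI exI[of _ b']) (simp add: b'_def D_mult D_power_p)
qed

lemma ev_in_x_power_span: "ev P \<in> x_power_span"
proof (induction P)
  case 0
  then show ?case
    using x_power_span_constant[OF D_0] by (simp add: ev_def)
next
  case (pCons a P)
  then show ?case
    by (simp add: ev_pCons x_power_span_add x_power_span_constant D_iota x_power_span_mult_x)
qed

text \<open>Every element is \<open>(P + Q y) / R\<close>; after multiplying numerator and denominator by
  \<open>R^(p-1)\<close> and writing \<open>y = y^p / F(x)^((p-1)/2)\<close>, all denominators are p-th powers.\<close>
lemma in_x_power_span: "z \<in> x_power_span"
proof -
  obtain P Q R where z: "z = (ev P + ev Q * y) / ev R"
    using function_field_element[of z] unfolding ev_def by blast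
  let ?G = "F ^ ((p - 1) div 2)"
  have y_power_p: "y ^ p = y * ev ?G"
    using p_gt_2 y_power_p_minus_1 by (metis Suc_diff_1 less_trans pos2 power_Suc)
  then have "ev ?G \<noteq> 0"
    using y_nonzero by (metis mult_zero_right power_not_zero)
  define c1 where "c1 = inverse (ev R) ^ p"
  define c2 where "c2 = y ^ p * inverse (ev ?G) ^ p"
  have constants: "D c1 = 0" "D c2 = 0"
    by (simp_all add: c1_def c2_def D_mult D_power_p)
  have y_eq: "y = c2 * ev ?G ^ (p - 1)"
  proof -
    have "y = y ^ p * inverse (ev ?G)"
      using y_power_p \<open>ev ?G \<noteq> 0\<close> by (simp add: field_simps)
    then show ?thesis
      unfolding c2_def using p_gt_2 by (subst (asm) inverse_eq_power_mult_inverse_power) (simp_all add: mult_ac)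
  qed
  have "z = (ev P + ev Q * y) * inverse (ev R)"
    using z by (simp add: divide_inverse)
  also have "\<dots> = c1 * (ev (P * R ^ (p - 1)) + c2 * ev (Q * R ^ (p - 1) * ?G ^ (p - 1)))"
    using p_gt_2
    by (subst inverse_eq_power_mult_inverse_power[of p], simp, subst y_eq)
      (simp add: c1_def ev_mult ev_power algebra_simps)
  finally show ?thesis
    using constants by (simp only:)
      (intro x_power_span_constant_mult x_power_span_add ev_in_x_power_span)
qed

lemma D_eq_power_mult_x_power_imp_0:
  assumes "D \<psi> = e ^ p * x ^ (p - 1)"
  shows "e = 0"
proof -
  obtain b where b: "\<forall>j. D (b j) = 0" "\<psi> = (\<Sum>j<p. b j * x ^ j)"
    using in_x_power_span[of \<psi>] unfolding x_power_span_def by blast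
  obtain q where q: "p = Suc q"
    using p_gt_2 by (cases p) auto
  define c where "c j = (if j < q then of_nat (Suc j) * b (Suc j) else - (e ^ p))" for j
  have "D \<psi> = (\<Sum>j<p. of_nat j * b j * x ^ (j - 1))"
    unfolding b(2) D_sum using b(1) D_x by (intro sum.cong refl) (simp add: D_constant_mult_power)
  also have "\<dots> = (\<Sum>j<q. of_nat (Suc j) * b (Suc j) * x ^ j)"
    unfolding q by (subst sum.lessThan_Suc_shift) (simp add: mult_ac)
  finally have D_psi: "D \<psi> = (\<Sum>j<q. of_nat (Suc j) * b (Suc j) * x ^ j)" .
  have "(\<Sum>j\<le>q. c j * x ^ j) = (\<Sum>j<q. c j * x ^ j) + c q * x ^ q"
    by (simp add: lessThan_Suc_atMost[symmetric])
  also have "\<dots> = D \<psi> - e ^ p * x ^ (p - 1)"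
    unfolding D_psi c_def q by simp
  also have "\<dots> = 0"
    using assms by simp
  finally have combination: "(\<Sum>j\<le>q. c j * x ^ j) = 0" .
  have "c q = 0"
  proof (rule constant_combination_of_powers_eq_0[OF D_x _ _ combination])
    fix j
    have "D (of_nat (Suc j) * b (Suc j)) = 0"
      using b(1) by (simp add: D_mult D_add D_1 D_of_nat)
    then show "D (c j) = 0"
      by (simp add: c_def D_minus D_power_p)
  qed (simp_all add: q CHAR_L)
  then show ?thesis
    by (simp add: c_def)
qed

lemma cartier_eqI:
  assumes "h = D \<phi> + \<eta> ^ p * x ^ (p - 1)"
  shows "cartier D x p h = \<eta>"
  unfolding cartier_def
proof (rule the_equality)
  show "\<exists>\<phi>. h = D \<phi> + \<eta> ^ p * x ^ (p - 1)"
    using assms by blast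
next
  fix \<eta>' assume "\<exists>\<phi>'. h = D \<phi>' + \<eta>' ^ p * x ^ (p - 1)"
  then obtain \<phi>' where "h = D \<phi>' + \<eta>' ^ p * x ^ (p - 1)" ..
  then have "D (\<phi>' - \<phi>) = (\<eta> - \<eta>') ^ p * x ^ (p - 1)"
    using assms by (simp add: D_diff power_p_diff algebra_simps)
  then show "\<eta>' = \<eta>"
    using D_eq_power_mult_x_power_imp_0 by fastforce
qed

lemma cartier_ev_div_power:
  assumes "w \<noteq> 0"
  shows "cartier D x p (ev (pderiv \<Psi> + monom (a ^ p) (p - 1) + monom (b ^ p) (2 * p - 1)) / w ^ p)
    = (\<iota> a + \<iota> b * x) / w"
proof (rule cartier_eqI)
  have "D (ev \<Psi> / w ^ p) = ev (pderiv \<Psi>) / w ^ p"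
    by (simp add: divide_inverse D_mult D_ev flip: power_inverse) (simp add: D_power_p)
  moreover have "((\<iota> a + \<iota> b * x) / w) ^ p = (\<iota> (a ^ p) + \<iota> (b ^ p) * x ^ p) / w ^ p"
    by (simp add: power_divide power_p_add power_mult_distrib iota_power)
  moreover have "x ^ (2 * p - 1) = x ^ p * x ^ (p - 1)"
  proof -
    have "2 * p - 1 = p + (p - 1)"
      using p_gt_2 by simp
    then show ?thesis
      by (simp add: power_add)
  qed
  ultimately show "ev (pderiv \<Psi> + monom (a ^ p) (p - 1) + monom (b ^ p) (2 * p - 1)) / w ^ p
      = D (ev \<Psi> / w ^ p) + ((\<iota> a + \<iota> b * x) / w) ^ p * x ^ (p - 1)"
    by (simp add: ev_add ev_monom add_divide_distrib algebra_simps)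
qed

text \<open>Genus at most 2 keeps the degree of \<open>x^i F^((p-1)/2)\<close> below \<open>3p - 1\<close>.\<close>
lemma cartier_x_power_div_y:
  assumes "degree F \<le> 6" "i \<le> 1"
    and "a ^ p = cartier_manin_coeff F p i 1" "b ^ p = cartier_manin_coeff F p i 2"
  shows "cartier D x p (x ^ i / y) = \<iota> a / y + \<iota> b * (x / y)"
proof -
  define H where "H = monom 1 i * F ^ ((p - 1) div 2)"
  have "degree H \<le> i + 6 * ((p - 1) div 2)"
    using degree_power_le[of F "(p - 1) div 2"] assms(1) unfolding H_def
    by (intro order.trans[OF degree_mult_le] add_mono order.trans[OF degree_monom_le]) (auto intro: order.trans)
  then have "degree H < 3 * p - 1"
    using assms(2) p_minus_1_eq p_gt_2 by linarith
  then obtain \<Psi> where "H = pderiv \<Psi> + monom (coeff H (p - 1)) (p - 1) + monom (coeff H (2 * p - 1)) (2 * p - 1)"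
    using exists_pderiv_eq_minus_monoms[OF CHAR_k] p_gt_2 by auto
  moreover have "coeff H (c * p - 1) = cartier_manin_coeff F p i c" if "c > 0" for c
  proof -
    have "p \<le> c * p"
      using that by simp
    then have "i \<le> c * p - 1"
      using assms(2) p_gt_2 by linarith
    then show ?thesis
      by (simp add: H_def cartier_manin_coeff_def coeff_monom_mult)
  qed
  ultimately have H: "H = pderiv \<Psi> + monom (a ^ p) (p - 1) + monom (b ^ p) (2 * p - 1)"
    using assms(3,4) by (metis mult_1 zero_less_one zero_less_numeral)
  have "ev H = x ^ i * y ^ (p - 1)"
    unfolding H_def ev_mult ev_monom iota_1 y_power_p_minus_1 by simp
  moreover have "y ^ p = y ^ (p - 1) * y"
    using p_gt_2 by (simp flip: power_Suc2)
  ultimately have "x ^ i / y = ev H / y ^ p"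
    using y_nonzero by (simp add: field_simps)
  then show ?thesis
    unfolding H using cartier_ev_div_power[OF y_nonzero] by (simp add: add_divide_distrib)
qed

end

lemma cartier_manin_coeff_const_plus_dickson5_in_Fp_poly_at:
  assumes "a \<in> Fp_poly_at t"
  shows "cartier_manin_coeff ([:a:] + map_poly of_int dickson5) p i c \<in> Fp_poly_at t"
  unfolding cartier_manin_coeff_def by (rule coeff_const_plus_dickson5_power_in_Fp_poly_at[OF assms])

lemma cartier_manin_coeff_const_plus_dickson5_eq_0:
  fixes a :: "'k::field"
  assumes "CHAR('k) = p" "prime p" "p \<noteq> 2" "c \<in> {1, 2}"
    and "(i = 0 \<and> c * p mod 5 \<in> {2, 3}) \<or> (i = 1 \<and> c * p mod 5 \<in> {1, 4})"
  shows "cartier_manin_coeff ([:a:] + map_poly of_int dickson5) p i c = 0"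
  unfolding cartier_manin_coeff_def
proof (rule coeff_const_plus_dickson5_power_eq_0)
  fix m assume m: "m \<le> (p - 1) div 2"
  have "p > 2"
    using prime_ge_2_nat[OF assms(2)] assms(3) by linarith
  obtain n where n: "n = c * p"
    by blast
  have "p \<le> n"
    using assms(4) n by auto
  have i: "i \<le> 1" and residue: "(i = 0 \<and> n mod 5 \<in> {2, 3}) \<or> (i = 1 \<and> n mod 5 \<in> {1, 4})"
    using assms(5) n by auto
  have "n - 1 - i + i + 1 = c * p"
    using \<open>p \<le> n\<close> \<open>p > 2\<close> i n by linarith
  moreover have "2 * m \<le> p - 1"
    using m by presburger
  then have "5 * m < n - 1 - i + 2 * p"
    using \<open>p \<le> n\<close> \<open>p > 2\<close> i by linarith
  moreover have "\<not> 5 dvd (n - 1 - i + 2 * j) \<and> \<not> 5 dvd (n - 1 - i + 2 * j + 2)" if j: "j \<le> i" for j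
  proof -
    have "3 \<le> n"
      using \<open>p \<le> n\<close> \<open>p > 2\<close> by linarith
    consider "i = 0" "j = 0" "n mod 5 = 2 \<or> n mod 5 = 3" | "i = 1" "j \<le> 1" "n mod 5 = 1 \<or> n mod 5 = 4"
      using residue j by force
    then show ?thesis
      by cases (use \<open>3 \<le> n\<close> in presburger)+
  qed
  ultimately show "int CHAR('k) dvd coeff (dickson5 ^ m) (c * p - 1 - i)"
    unfolding assms(1) n by (intro prime_dvd_coeff_dickson5_power[OF assms(2)])
qed

lemma cartier_manin_coeff_const_plus_dickson5_vanishing:
  fixes a :: "'k::field"
  assumes "CHAR('k) = p" "prime p" "p \<noteq> 2"
  defines "M \<equiv> cartier_manin_coeff ([:a:] + map_poly of_int dickson5) p"
  shows "p mod 5 \<in> {1, 4} \<Longrightarrow> M 1 1 = 0 \<and> M 0 2 = 0"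
    and "p mod 5 \<in> {2, 3} \<Longrightarrow> M 0 1 = 0 \<and> M 1 2 = 0"
proof -
  note vanish = cartier_manin_coeff_const_plus_dickson5_eq_0[OF assms(1-3)]
  show "M 1 1 = 0 \<and> M 0 2 = 0" if "p mod 5 \<in> {1, 4}"
  proof -
    have "2 * p mod 5 \<in> {2, 3}"
      using that by (simp only: insert_iff empty_iff simp_thms) presburger
    then show ?thesis
      unfolding M_def using that by (simp add: vanish)
  qed
  show "M 0 1 = 0 \<and> M 1 2 = 0" if "p mod 5 \<in> {2, 3}"
  proof -
    have "2 * p mod 5 \<in> {1, 4}"
      using that by (simp only: insert_iff empty_iff simp_thms) presburger
    then show ?thesis
      unfolding M_def using that by (simp add: vanish)
  qed
qed

theorem theorem4p1:
  fixes p :: nat and t :: "'k::field" and \<iota> :: "'k \<Rightarrow> 'L::field"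
    and x y :: 'L and D :: "'L \<Rightarrow> 'L"
  assumes "prime p" and "p \<noteq> 2" and "p \<noteq> 5"
    and "is_perfect_closure_Fpt p t"
    and "is_hyperelliptic_function_field \<iota> [:2 - 4 * t, 5, 0, -5, 0, 1:] x y D"
  shows "\<exists>m11 m12 m21 m22 :: 'k.
     cartier D x p (1 / y) = \<iota> m11 * (1 / y) + \<iota> m21 * (x / y) \<and>
     cartier D x p (x / y) = \<iota> m12 * (1 / y) + \<iota> m22 * (x / y) \<and>
     (p mod 5 \<in> {1, 4} \<longrightarrow> m12 = 0 \<and> m21 = 0) \<and>
     (p mod 5 \<in> {2, 3} \<longrightarrow> m11 = 0 \<and> m22 = 0) \<and>
     (\<forall>m \<in> {m11, m12, m21, m22}. m ^ p \<in> Fp_poly_at t)"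
proof -
  let ?F = "[:2 - 4 * t, 5, 0, -5, 0, 1:]"
  let ?M = "cartier_manin_coeff ?F p"
  have F_eq: "?F = [:2 - 4 * t:] + map_poly of_int dickson5"
    by (simp add: dickson5_def map_poly_pCons)
  have CHAR_k: "CHAR('k) = p" and perfect: "surj (\<lambda>a::'k. a ^ p)"
    using assms(4) unfolding is_perfect_closure_Fpt_def by blast+
  interpret hyperelliptic_function_field \<iota> ?F x y D p
    using assms CHAR_k by unfold_locales simp_all
  have "\<exists>m. m ^ p = ?M i c" for i c
    using perfect by (metis surjD)
  then obtain m11 m21 m12 m22
    where m: "m11 ^ p = ?M 0 1" "m21 ^ p = ?M 0 2" "m12 ^ p = ?M 1 1" "m22 ^ p = ?M 1 2"
    by metis
  have "2 - 4 * t \<in> Fp_poly_at t"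
    unfolding Fp_poly_at_iff by (intro exI[of _ "[:2, -4:]"]) (simp add: map_poly_pCons)
  then have "m ^ p \<in> Fp_poly_at t" if "m \<in> {m11, m12, m21, m22}" for m
    using that m unfolding F_eq by (auto intro: cartier_manin_coeff_const_plus_dickson5_in_Fp_poly_at)
  moreover have "p mod 5 \<in> {1, 4} \<longrightarrow> m12 = 0 \<and> m21 = 0" "p mod 5 \<in> {2, 3} \<longrightarrow> m11 = 0 \<and> m22 = 0"
    using cartier_manin_coeff_const_plus_dickson5_vanishing[OF CHAR_k assms(1,2), of "2 - 4 * t", folded F_eq]
      m power_eq_0_iff by metis+
  moreover have "cartier D x p (1 / y) = \<iota> m11 * (1 / y) + \<iota> m21 * (x / y)"
    using cartier_x_power_div_y[of 0 m11 m21] m(1,2) by simp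
  moreover have "cartier D x p (x / y) = \<iota> m12 * (1 / y) + \<iota> m22 * (x / y)"
    using cartier_x_power_div_y[of 1 m12 m22] m(3,4) by simp
  ultimately show ?thesis
    by blast
qed

end
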